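(* There exists a family $\mathcal{F}$ of real functions with $|\mathcal{F}| = \mathfrak{c}$ such that every $F\in\mathcal{F}$ (as a subspace of $\mathbb{R}^2$) is connected and completely metrizable, and the spaces in $\mathcal{F}$ are incomparable.
   Context: $\mathfrak{c}=2^{\aleph_0}$. A real function is a function $F:\mathbb{R}\to\mathbb{R}$, identified with its graph in $\mathbb{R}^2$ with the subspace topology. Topological spaces $X_i$ ($i\in I$) are called incomparable if, for all $i,j\in I$, whenever $X_i$ is homeomorphic to a subspace $S_j$ of $X_j$, then $i=j$ and $S_j=X_j$. *)

theory Defs
  imports "HOL-Analysis.Analysis" "HOL-Library.Equipollence"
begin

definition graph_of :: "(real \<Rightarrow> real) \<Rightarrow> (real \<times> real) set" where
  "graph_of f = {(x, f x) | x. True}"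

end

theory Submission
  imports Defs
begin

(* Glue topologist's sine curves together: on each interval (n, n + 1) the graph of sine_curve A
   oscillates towards n, and also towards n + 1 exactly when n + 1 \<in> A.  Each piece lies between
   a connected set and its closure, so the graph is connected; it is also a G_delta in the plane.

   An embedding h of the graph of sine_curve A into that of sine_curve B has the form
   h (x, f x) = (\<phi> x, g (\<phi> x)) with \<phi> injective and sending intervals to intervals, hence
   strictly monotone.  The graph restricted to [x, \<infinity>) is locally compact at x iff x is not an
   integer, and restricted to (-\<infinity>, x] iff x \<notin> A; h preserves these properties.  Hence \<phi> is
   increasing, acts on the integers as a shift n \<mapsto> n + c, and shifts A onto B.  Anchoring the sets
   (every n \<le> 0 belongs to them, 1 does not) forces c = 0, so A = B and \<phi> is onto.  Coding the
   Dedekind cuts of the reals into anchored sets gives continuum many incomparable graphs. *)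

subsection \<open>Graphs over subsets of the line\<close>

definition graph_on :: "(real \<Rightarrow> real) \<Rightarrow> real set \<Rightarrow> (real \<times> real) set" where
  "graph_on f E = (\<lambda>x. (x, f x)) ` E"

lemma graph_of_eq_graph_on: "graph_of f = graph_on f UNIV"
  by (auto simp: graph_of_def graph_on_def)

lemma graph_on_subset_graph_of: "graph_on f E \<subseteq> graph_of f"
  by (auto simp: graph_of_def graph_on_def)

lemma fst_image_graph_on [simp]: "fst ` graph_on f E = E"
  by (force simp: graph_on_def)

lemma graph_on_Icc_subset_closure:
  assumes "continuous_on {c..d} f" "c < d"
  shows "graph_on f {c..d} \<subseteq> closure (graph_on f {c<..<d})"
proof -
  have "(\<lambda>x. (x, f x)) ` closure {c<..<d} \<subseteq> closure (graph_on f {c<..<d})"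
    unfolding graph_on_def
    by (rule image_closure_subset)
      (use assms in \<open>auto intro: continuous_on_Pair continuous_on_id closure_subset[THEN subsetD]\<close>)
  then show ?thesis
    using assms(2) by (simp add: graph_on_def)
qed

lemma graph_on_in_closure_if_oscillating:
  assumes "\<And>e. e > 0 \<Longrightarrow> \<exists>t\<in>E. \<bar>t - x\<bar> < e \<and> f t = f x"
  shows "(x, f x) \<in> closure (graph_on f E)"
  unfolding closure_approachable
proof (intro allI impI)
  fix e :: real
  assume "e > 0"
  then obtain t where "t \<in> E" "\<bar>t - x\<bar> < e" "f t = f x"
    using assms by blast
  then show "\<exists>p\<in>graph_on f E. dist p (x, f x) < e"
    by (intro bexI[of _ "(t, f t)"]) (auto simp: graph_on_def dist_Pair_Pair dist_real_def)
qed

lemma connected_graph_on_Icc_closure: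
  assumes "a < b" "continuous_on {a<..<b} f"
    and "(a, f a) \<in> closure (graph_on f {a<..<b})" "(b, f b) \<in> closure (graph_on f {a<..<b})"
  shows "connected (graph_on f {a..b})"
proof (rule connected_intermediate_closure)
  show "connected (graph_on f {a<..<b})"
    unfolding graph_on_def
    by (intro connected_continuous_image continuous_on_Pair continuous_on_id assms(2)) auto
  have "{a..b} = {a<..<b} \<union> {a, b}"
    using assms(1) by auto
  then show "graph_on f {a..b} \<subseteq> closure (graph_on f {a<..<b})"
    using assms(3,4) closure_subset[of "graph_on f {a<..<b}"] by (auto simp: graph_on_def)
  show "graph_on f {a<..<b} \<subseteq> graph_on f {a..b}"
    by (auto simp: graph_on_def)
qed

lemma connected_graph_on_Icc_from_unit_pieces:
  assumes unit: "\<And>n a b. of_int n \<le> a \<Longrightarrow> a \<le> b \<Longrightarrow> b \<le> of_int n + 1 \<Longrightarrow>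
                   connected (graph_on f {a..b})"
  shows "connected (graph_on f {a..b})"
proof -
  have pieces: "connected (graph_on f {a..b})" if "b \<le> of_int \<lfloor>a\<rfloor> + of_nat k + 1" for k b
    using that
  proof (induction k arbitrary: b)
    case 0
    then show ?case
      using unit[of "\<lfloor>a\<rfloor>" a b] by (cases "a \<le> b") (auto simp: graph_on_def)
  next
    case (Suc k)
    define m :: real where "m = of_int \<lfloor>a\<rfloor> + of_nat k + 1"
    show ?case
    proof (cases "b \<le> m")
      case True
      then show ?thesis
        using Suc.IH[of b] by (simp add: m_def)
    next
      case False
      have "a \<le> m"
        unfolding m_def by linarith
      then have "{a..b} = {a..m} \<union> {m..b}"
        using False by auto
      then have split: "graph_on f {a..b} = graph_on f {a..m} \<union> graph_on f {m..b}"
        by (simp add: graph_on_def image_Un)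
      have "connected (graph_on f {a..m})"
        using Suc.IH[of m] by (simp add: m_def)
      moreover have "connected (graph_on f {m..b})"
        by (rule unit[of "\<lfloor>a\<rfloor> + int k + 1"]) (use False Suc.prems in \<open>auto simp: m_def\<close>)
      moreover have "(m, f m) \<in> graph_on f {a..m} \<inter> graph_on f {m..b}"
        using \<open>a \<le> m\<close> False by (auto simp: graph_on_def)
      ultimately show ?thesis
        unfolding split by (intro connected_Un) auto
    qed
  qed
  show ?thesis
    by (rule pieces[of _ "nat \<lceil>b - a\<rceil>"]) linarith
qed

lemma connected_graph_of_if_Icc:
  assumes "\<And>a b. connected (graph_on f {a..b})"
  shows "connected (graph_of f)"
proof -
  let ?G = "\<lambda>y. graph_on f {min 0 y..max 0 y}"
  have "graph_of f = \<Union> (range ?G)"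
  proof
    show "graph_of f \<subseteq> \<Union> (range ?G)"
    proof
      fix p
      assume "p \<in> graph_of f"
      then obtain x where "p = (x, f x)"
        by (auto simp: graph_of_def)
      then have "p \<in> ?G x"
        by (simp add: graph_on_def)
      then show "p \<in> \<Union> (range ?G)"
        by blast
    qed
    show "\<Union> (range ?G) \<subseteq> graph_of f"
      using graph_on_subset_graph_of by blast
  qed
  moreover have "(0, f 0) \<in> \<Inter> (range ?G)"
    by (auto simp: graph_on_def)
  then have "\<Inter> (range ?G) \<noteq> {}"
    by blast
  ultimately show ?thesis
    using assms connected_Union[of "range ?G"] by auto
qed

lemma completely_metrizable_graph_of:
  assumes "closed Z" "continuous_on (- Z) f" "closed (graph_on f Z)"
  shows "completely_metrizable_space (top_of_set (graph_of f))"
proof -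
  define W :: "(real \<times> real) set" where "W = fst -` (- Z)"
  have "open W"
    unfolding W_def using assms(1) by (intro open_vimage_fst) auto
  have "continuous_on W (\<lambda>p. snd p - f (fst p))"
    unfolding W_def by (intro continuous_intros continuous_on_compose2[OF assms(2)]) auto
  from continuous_closedin_preimage_constant[OF this, of 0]
  obtain T where "closed T" and T: "{p \<in> W. snd p - f (fst p) = 0} = W \<inter> T"
    unfolding closedin_closed by blast
  have "graph_of f = {p \<in> W. snd p - f (fst p) = 0} \<union> graph_on f Z"
    by (auto simp: W_def graph_of_def graph_on_def)
  then have "graph_of f = (W \<inter> T) \<union> graph_on f Z"
    using T by simp
  then have "gdelta_in euclidean (graph_of f)"
    using \<open>open W\<close> \<open>closed T\<close> assms(3)
    by (simp add: gdelta_in_Un gdelta_in_Int open_imp_gdelta_in closed_imp_gdelta_in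
        metrizable_space_euclidean)
  then show ?thesis
    by (intro completely_metrizable_space_gdelta_in completely_metrizable_space_euclidean)
qed

subsection \<open>Pointwise local compactness\<close>

definition locally_compact_at :: "'a::topological_space set \<Rightarrow> 'a \<Rightarrow> bool" where
  "locally_compact_at S p \<longleftrightarrow>
     (\<exists>U K. openin (top_of_set S) U \<and> compact K \<and> p \<in> U \<and> U \<subseteq> K \<and> K \<subseteq> S)"

lemma locally_compact_at_homeomorphism:
  assumes hom: "homeomorphism S T h k" and "locally_compact_at S p"
  shows "locally_compact_at T (h p)"
proof -
  obtain U K where UK: "openin (top_of_set S) U" "compact K" "p \<in> U" "U \<subseteq> K" "K \<subseteq> S"
    using assms(2) unfolding locally_compact_at_def by blast
  have "openin (top_of_set T) (h ` U)"
    by (rule homeomorphism_imp_open_map[OF hom UK(1)])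
  moreover have "compact (h ` K)"
    using hom UK(2,5) by (meson compact_continuous_image continuous_on_subset homeomorphism_def)
  moreover have "h ` K \<subseteq> T"
    using hom UK(5) by (auto simp: homeomorphism_def)
  ultimately show ?thesis
    unfolding locally_compact_at_def using UK(3,4) by blast
qed

lemma locally_compact_at_homeomorphism_iff:
  assumes hom: "homeomorphism S T h k" and "p \<in> S"
  shows "locally_compact_at T (h p) \<longleftrightarrow> locally_compact_at S p"
proof
  have "k (h p) = p"
    using hom assms(2) by (simp add: homeomorphism_def)
  then show "locally_compact_at S p" if "locally_compact_at T (h p)"
    using locally_compact_at_homeomorphism[OF homeomorphism_symD[OF hom] that] by simp
qed (rule locally_compact_at_homeomorphism[OF hom])

lemma not_locally_compact_at:
  fixes p :: "'a::metric_space"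
  assumes "\<And>e. e > 0 \<Longrightarrow> \<exists>q \<in> ball p e - S. q \<in> closure (S \<inter> ball p e)"
  shows "\<not> locally_compact_at S p"
proof
  assume "locally_compact_at S p"
  then obtain V K where "open V" "p \<in> V" "compact K" "S \<inter> V \<subseteq> K" "K \<subseteq> S"
    unfolding locally_compact_at_def openin_open by blast
  moreover obtain e where "e > 0" "ball p e \<subseteq> V"
    using \<open>open V\<close> \<open>p \<in> V\<close> open_contains_ball by blast
  ultimately have "closure (S \<inter> ball p e) \<subseteq> S"
    by (meson closure_minimal compact_imp_closed inf_mono order_refl order_trans)
  then show False
    using assms[OF \<open>e > 0\<close>] by blast
qed

lemma locally_compact_at_graph_on:
  assumes "continuous_on {c..d} f" "{c..d} \<subseteq> E" "open V" "E \<inter> V \<subseteq> {c..d}" "x \<in> E \<inter> V"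
  shows "locally_compact_at (graph_on f E) (x, f x)"
proof -
  have "openin (top_of_set (graph_on f E)) (graph_on f E \<inter> (V \<times> UNIV))"
    using assms(3) by (intro openin_open_Int open_Times) auto
  moreover have "compact (graph_on f {c..d})"
    unfolding graph_on_def
    by (intro compact_continuous_image continuous_on_Pair continuous_on_id assms(1)) auto
  moreover have "graph_on f E \<inter> (V \<times> UNIV) \<subseteq> graph_on f {c..d}"
    "graph_on f {c..d} \<subseteq> graph_on f E" "(x, f x) \<in> graph_on f E \<inter> (V \<times> UNIV)"
    using assms(2,4,5) by (auto simp: graph_on_def)
  ultimately show ?thesis
    unfolding locally_compact_at_def by blast
qed

lemma not_locally_compact_at_graph_on:
  assumes "a < f x" "f x \<le> b"
    and oscillates: "\<And>c e. a \<le> c \<Longrightarrow> c \<le> b \<Longrightarrow> e > 0 \<Longrightarrow> \<exists>t\<in>E. \<bar>t - x\<bar> < e \<and> f t = c"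
  shows "\<not> locally_compact_at (graph_on f E) (x, f x)"
proof (rule not_locally_compact_at)
  fix e :: real
  assume "e > 0"
  define c where "c = max a (f x - e / 2)"
  have c: "a \<le> c" "c \<le> b" "c < f x" "f x - c \<le> e / 2"
    using assms(1,2) \<open>e > 0\<close> unfolding c_def by linarith+
  have dist_c: "dist (t, c) (x, f x) \<le> \<bar>t - x\<bar> + (f x - c)" for t
  proof -
    have "dist (t, c) (x, f x) \<le> dist (t, c) (x, c) + dist (x, c) (x, f x)"
      by (rule dist_triangle)
    then show ?thesis
      using c by (simp add: dist_Pair_Pair dist_real_def)
  qed
  have "(x, c) \<notin> graph_on f E"
    using c by (auto simp: graph_on_def)
  moreover have "(x, c) \<in> ball (x, f x) e"
    using dist_c[of x] c \<open>e > 0\<close> by (simp add: dist_commute)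
  moreover have "(x, c) \<in> closure (graph_on f E \<inter> ball (x, f x) e)"
    unfolding closure_approachable
  proof (intro allI impI)
    fix \<epsilon> :: real
    assume "\<epsilon> > 0"
    then obtain t where t: "t \<in> E" "\<bar>t - x\<bar> < min \<epsilon> (e / 2)" "f t = c"
      using oscillates[OF c(1,2), of "min \<epsilon> (e / 2)"] \<open>e > 0\<close> by auto
    have "(t, c) \<in> graph_on f E \<inter> ball (x, f x) e"
      using t dist_c[of t] c by (force simp: graph_on_def dist_commute)
    moreover have "dist (t, c) (x, c) < \<epsilon>"
      using t by (simp add: dist_Pair_Pair dist_real_def)
    ultimately show "\<exists>q\<in>graph_on f E \<inter> ball (x, f x) e. dist q (x, c) < \<epsilon>"
      by blast
  qed
  ultimately show "\<exists>q\<in>ball (x, f x) e - graph_on f E. q \<in> closure (graph_on f E \<inter> ball (x, f x) e)"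
    by blast
qed

subsection \<open>The sine curves\<close>

lemma sin_attains_above:
  fixes b c :: real
  assumes "\<bar>c\<bar> \<le> 1"
  obtains y where "b \<le> y" "sin y = c"
proof -
  obtain k :: nat where "(b - arcsin c) / (2 * pi) \<le> real k"
    using real_arch_simple by blast
  then have "b \<le> arcsin c + 2 * pi * real k"
    by (simp add: pos_divide_le_eq mult_ac)
  moreover have "sin (arcsin c + 2 * pi * real k) = c"
    using assms by (simp add: sin_add sin_integer_2pi cos_integer_2pi)
  ultimately show ?thesis
    using that by blast
qed

lemma sin_singular_attains:
  fixes a c e :: real
  assumes "0 \<le> a" "\<bar>c\<bar> \<le> 1" "e > 0"
  shows "\<exists>s. 0 < s \<and> s < e \<and> s < 1 \<and> sin (1 / s + a / (1 - s)) = c"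
proof -
  define \<psi> where "\<psi> s = 1 / s + a / (1 - s)" for s :: real
  have \<psi>_ge: "1 / s \<le> \<psi> s" if "s < 1" for s
  proof -
    have "0 \<le> a / (1 - s)"
      using assms(1) that by simp
    then show ?thesis
      unfolding \<psi>_def by linarith
  qed
  define s1 where "s1 = min e 1 / 2"
  have s1: "0 < s1" "s1 < e" "s1 < 1"
    using assms(3) unfolding s1_def by linarith+
  obtain y where "\<psi> s1 \<le> y" "sin y = c"
    using sin_attains_above[OF assms(2)] .
  moreover have "0 < 1 / s1" "1 / s1 \<le> \<psi> s1"
    using s1 \<psi>_ge by auto
  ultimately have "0 < y" "1 / s1 < y + 2"
    by linarith+
  \<comment> \<open>\<psi> blows up at 0, so it takes the value y between s0 = 1 / (y + 2) and s1\<close>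
  define s0 where "s0 = 1 / (y + 2)"
  have "0 < s0"
    using \<open>0 < y\<close> by (simp add: s0_def)
  have "1 < s1 * (y + 2)"
    using \<open>1 / s1 < y + 2\<close> s1(1) by (simp add: divide_less_eq mult.commute)
  then have "s0 < s1"
    using \<open>0 < y\<close> by (simp add: s0_def divide_less_eq mult.commute)
  have "1 / s0 = y + 2"
    using \<open>0 < y\<close> by (simp add: s0_def)
  then have "y \<le> \<psi> s0"
    using \<psi>_ge[of s0] \<open>s0 < s1\<close> s1(3) by linarith
  have "isCont \<psi> t" if "s0 \<le> t" "t \<le> s1" for t
    using that \<open>0 < s0\<close> s1 unfolding \<psi>_def by (intro continuous_intros) auto
  then obtain s where s: "s0 \<le> s" "s \<le> s1" "\<psi> s = y"
    using IVT2[of \<psi> s1 y s0] \<open>\<psi> s1 \<le> y\<close> \<open>y \<le> \<psi> s0\<close> \<open>s0 < s1\<close> by auto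
  show ?thesis
    using s s1 \<open>0 < s0\<close> \<open>sin y = c\<close> by (intro exI[of _ s]) (auto simp: \<psi>_def)
qed

definition sine_piece :: "int set \<Rightarrow> int \<Rightarrow> real \<Rightarrow> real" where
  "sine_piece A n x = sin (1 / (x - of_int n) + of_bool (n + 1 \<in> A) / (of_int n + 1 - x))"

definition sine_curve :: "int set \<Rightarrow> real \<Rightarrow> real" where
  "sine_curve A x = (if x \<in> \<int> then sin 1 else sine_piece A \<lfloor>x\<rfloor> x)"

lemma not_Ints_between:
  fixes x :: real
  assumes "of_int n < x" "x < of_int n + 1"
  shows "x \<notin> \<int>"
proof
  assume "x \<in> \<int>"
  then obtain m where "x = of_int m"
    by (auto elim: Ints_cases)
  with assms have "of_int n < (of_int m :: real)" "(of_int m :: real) < of_int (n + 1)"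
    by simp_all
  then show False
    unfolding of_int_less_iff by linarith
qed

lemma of_int_floor_less_if_not_Ints: "x \<notin> \<int> \<Longrightarrow> of_int \<lfloor>x\<rfloor> < (x :: real)"
  using frac_gt_0_iff[of x] by (simp add: frac_def)

lemma sine_curve_Ints [simp]: "x \<in> \<int> \<Longrightarrow> sine_curve A x = sin 1"
  by (simp add: sine_curve_def)

lemma sine_curve_eq_piece:
  assumes "of_int n < x" "x < of_int n + 1"
  shows "sine_curve A x = sine_piece A n x"
proof -
  have "\<lfloor>x\<rfloor> = n"
    using assms by (simp add: floor_eq_iff)
  then show ?thesis
    using not_Ints_between[OF assms] by (simp add: sine_curve_def)
qed

lemma continuous_on_sine_curve_unit: "continuous_on {of_int n<..<of_int n + 1} (sine_curve A)"
proof -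
  have "continuous_on {of_int n<..<of_int n + 1} (sine_piece A n)"
    unfolding sine_piece_def by (intro continuous_intros) auto
  then show ?thesis
    by (rule continuous_on_eq) (simp add: sine_curve_eq_piece[of n])
qed

lemma continuous_on_sine_curve_unit_right:
  assumes "n + 1 \<notin> A"
  shows "continuous_on {of_int n<..of_int n + 1} (sine_curve A)"
proof -
  have piece: "sine_piece A n x = sin (1 / (x - of_int n))" for x
    using assms by (simp add: sine_piece_def)
  have "continuous_on {of_int n<..of_int n + 1} (sine_piece A n)"
    unfolding piece by (intro continuous_intros) auto
  moreover have "sine_curve A x = sine_piece A n x" if "x \<in> {of_int n<..of_int n + 1}" for x
    using that sine_curve_eq_piece[of n x A] by (cases "x = of_int n + 1") (auto simp: piece)
  ultimately show ?thesis
    using continuous_on_cong by blast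
qed

lemma continuous_on_sine_curve_Compl_Ints: "continuous_on (- \<int>) (sine_curve A)"
proof (intro continuous_at_imp_continuous_on ballI)
  fix x :: real
  assume "x \<in> - \<int>"
  then have "x \<in> {of_int \<lfloor>x\<rfloor><..<of_int \<lfloor>x\<rfloor> + 1}"
    using of_int_floor_less_if_not_Ints[of x] by simp
  then show "isCont (sine_curve A) x"
    using continuous_on_sine_curve_unit[of "\<lfloor>x\<rfloor>" A]
    by (simp add: continuous_on_eq_continuous_at)
qed

lemma sine_curve_attains_right:
  assumes "\<bar>c\<bar> \<le> 1" "e > 0"
  shows "\<exists>t. of_int n < t \<and> t < of_int n + e \<and> sine_curve A t = c"
proof -
  obtain s where s: "0 < s" "s < e" "s < 1" "sin (1 / s + of_bool (n + 1 \<in> A) / (1 - s)) = c"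
    using sin_singular_attains[of "of_bool (n + 1 \<in> A)"] assms by auto
  have "sine_curve A (of_int n + s) = sine_piece A n (of_int n + s)"
    by (rule sine_curve_eq_piece) (use s in auto)
  then have "sine_curve A (of_int n + s) = c"
    using s by (simp add: sine_piece_def)
  with s show ?thesis
    by (intro exI[of _ "of_int n + s"]) auto
qed

lemma sine_curve_attains_left:
  assumes "n \<in> A" "\<bar>c\<bar> \<le> 1" "e > 0"
  shows "\<exists>t. of_int n - e < t \<and> t < of_int n \<and> sine_curve A t = c"
proof -
  obtain s where s: "0 < s" "s < e" "s < 1" "sin (1 / s + 1 / (1 - s)) = c"
    using sin_singular_attains[of 1] assms(2,3) by auto
  have "sine_curve A (of_int n - s) = sine_piece A (n - 1) (of_int n - s)"
    by (rule sine_curve_eq_piece) (use s in auto)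
  then have "sine_curve A (of_int n - s) = c"
    using s assms(1) by (simp add: sine_piece_def add.commute)
  with s show ?thesis
    by (intro exI[of _ "of_int n - s"]) auto
qed

lemma sine_curve_left_end_in_closure:
  assumes "of_int n \<le> a" "a < b" "b \<le> of_int n + 1"
  shows "(a, sine_curve A a) \<in> closure (graph_on (sine_curve A) {a<..<b})"
proof (cases "a = of_int n")
  case True
  show ?thesis
  proof (rule graph_on_in_closure_if_oscillating)
    fix e :: real
    assume "e > 0"
    then obtain t where "of_int n < t" "t < of_int n + min e (b - a)" "sine_curve A t = sin 1"
      using sine_curve_attains_right[of "sin 1" "min e (b - a)" n A] assms(2) abs_sin_le_one
      by auto
    then show "\<exists>t\<in>{a<..<b}. \<bar>t - a\<bar> < e \<and> sine_curve A t = sine_curve A a"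
      using True by (intro bexI[of _ t]) auto
  qed
next
  case False
  define m where "m = (a + b) / 2"
  have m: "a < m" "m < b"
    using assms(2) by (auto simp: m_def)
  have "continuous_on {a..m} (sine_curve A)"
    by (rule continuous_on_subset[OF continuous_on_sine_curve_unit[of n]]) (use False assms m in auto)
  have "(a, sine_curve A a) \<in> graph_on (sine_curve A) {a..m}"
    using m by (simp add: graph_on_def)
  also have "\<dots> \<subseteq> closure (graph_on (sine_curve A) {a<..<m})"
    by (rule graph_on_Icc_subset_closure) fact+
  also have "\<dots> \<subseteq> closure (graph_on (sine_curve A) {a<..<b})"
    by (rule closure_mono) (use m in \<open>auto simp: graph_on_def\<close>)
  finally show ?thesis .
qed

lemma sine_curve_right_end_in_closure:
  assumes "of_int n \<le> a" "a < b" "b \<le> of_int n + 1"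
  shows "(b, sine_curve A b) \<in> closure (graph_on (sine_curve A) {a<..<b})"
proof (cases "b = of_int n + 1 \<and> n + 1 \<in> A")
  case True
  show ?thesis
  proof (rule graph_on_in_closure_if_oscillating)
    fix e :: real
    assume "e > 0"
    then obtain t where "of_int (n + 1) - min e (b - a) < t" "t < of_int (n + 1)" "sine_curve A t = sin 1"
      using sine_curve_attains_left[of "n + 1" A "sin 1" "min e (b - a)"] True assms(2) abs_sin_le_one
      by auto
    moreover have "sine_curve A b = sin 1"
      using True by simp
    ultimately show "\<exists>t\<in>{a<..<b}. \<bar>t - b\<bar> < e \<and> sine_curve A t = sine_curve A b"
      using True by (intro bexI[of _ t]) auto
  qed
next
  case False
  define m where "m = (a + b) / 2"
  have m: "a < m" "m < b"
    using assms(2) by (auto simp: m_def)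
  have "{m..b} \<subseteq> {of_int n<..<of_int n + 1} \<or> n + 1 \<notin> A \<and> {m..b} \<subseteq> {of_int n<..of_int n + 1}"
    using False assms m by auto
  then have "continuous_on {m..b} (sine_curve A)"
    using continuous_on_subset continuous_on_sine_curve_unit continuous_on_sine_curve_unit_right
    by metis
  have "(b, sine_curve A b) \<in> graph_on (sine_curve A) {m..b}"
    using m by (simp add: graph_on_def)
  also have "\<dots> \<subseteq> closure (graph_on (sine_curve A) {m<..<b})"
    by (rule graph_on_Icc_subset_closure) fact+
  also have "\<dots> \<subseteq> closure (graph_on (sine_curve A) {a<..<b})"
    by (rule closure_mono) (use m in \<open>auto simp: graph_on_def\<close>)
  finally show ?thesis .
qed

lemma connected_graph_sine_curve_unit:
  assumes "of_int n \<le> a" "a \<le> b" "b \<le> of_int n + 1"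
  shows "connected (graph_on (sine_curve A) {a..b})"
proof (cases "a = b")
  case True
  then show ?thesis
    by (simp add: graph_on_def)
next
  case False
  then have "a < b"
    using assms(2) by simp
  moreover have "continuous_on {a<..<b} (sine_curve A)"
    by (rule continuous_on_subset[OF continuous_on_sine_curve_unit[of n]]) (use assms in auto)
  ultimately show ?thesis
    using sine_curve_left_end_in_closure[of n a b] sine_curve_right_end_in_closure[of n a b] assms
    by (intro connected_graph_on_Icc_closure) auto
qed

lemma connected_graph_on_sine_curve: "connected (graph_on (sine_curve A) {a..b})"
  by (rule connected_graph_on_Icc_from_unit_pieces) (rule connected_graph_sine_curve_unit)

lemma connected_graph_of_sine_curve: "connected (graph_of (sine_curve A))"
  by (rule connected_graph_of_if_Icc) (rule connected_graph_on_sine_curve)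

lemma completely_metrizable_graph_of_sine_curve:
  "completely_metrizable_space (top_of_set (graph_of (sine_curve A)))"
proof (rule completely_metrizable_graph_of)
  have "graph_on (sine_curve A) \<int> = \<int> \<times> {sin 1}"
    by (auto simp: graph_on_def)
  then show "closed (graph_on (sine_curve A) \<int>)"
    by (simp add: closed_Times closed_Ints)
qed (simp_all add: closed_Ints continuous_on_sine_curve_Compl_Ints)

lemma sin_one_gt_minus_one: "- 1 < sin (1 :: real)"
proof -
  have "0 < sin (1 :: real)"
    by (rule sin_gt_zero) (use pi_gt3 in auto)
  then show ?thesis
    by simp
qed

lemma not_locally_compact_at_graph_sine_curve_right:
  assumes "x \<in> \<int>" "x < y" "{x..y} \<subseteq> E"
  shows "\<not> locally_compact_at (graph_on (sine_curve A) E) (x, sine_curve A x)"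
proof (rule not_locally_compact_at_graph_on[where a = "- 1" and b = 1])
  show "- 1 < sine_curve A x" "sine_curve A x \<le> 1"
    using assms(1) sin_one_gt_minus_one by simp_all
  obtain n where n: "x = of_int n"
    using assms(1) by (auto elim: Ints_cases)
  fix c e :: real
  assume "- 1 \<le> c" "c \<le> 1" "e > 0"
  then obtain t where "of_int n < t" "t < of_int n + min e (y - x)" "sine_curve A t = c"
    using sine_curve_attains_right[of c "min e (y - x)" n A] assms(2) by (auto simp: abs_le_iff)
  then show "\<exists>t\<in>E. \<bar>t - x\<bar> < e \<and> sine_curve A t = c"
    using n assms(3) by (intro bexI[of _ t]) auto
qed

lemma not_locally_compact_at_graph_sine_curve_left:
  assumes "x \<in> of_int ` A" "y < x" "{y..x} \<subseteq> E"
  shows "\<not> locally_compact_at (graph_on (sine_curve A) E) (x, sine_curve A x)"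
proof (rule not_locally_compact_at_graph_on[where a = "- 1" and b = 1])
  obtain n where n: "n \<in> A" "x = of_int n"
    using assms(1) by blast
  then show "- 1 < sine_curve A x" "sine_curve A x \<le> 1"
    using sin_one_gt_minus_one by simp_all
  fix c e :: real
  assume "- 1 \<le> c" "c \<le> 1" "e > 0"
  then obtain t where "of_int n - min e (x - y) < t" "t < of_int n" "sine_curve A t = c"
    using sine_curve_attains_left[of n A c "min e (x - y)"] n(1) assms(2) by (auto simp: abs_le_iff)
  then show "\<exists>t\<in>E. \<bar>t - x\<bar> < e \<and> sine_curve A t = c"
    using n assms(3) by (intro bexI[of _ t]) auto
qed

lemma locally_compact_at_graph_sine_curve_right:
  assumes "x \<notin> \<int>" "E \<subseteq> {x..}" "x < y" "{x..y} \<subseteq> E"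
  shows "locally_compact_at (graph_on (sine_curve A) E) (x, sine_curve A x)"
proof -
  define n where "n = \<lfloor>x\<rfloor>"
  have n: "of_int n < x" "x < of_int n + 1"
    using of_int_floor_less_if_not_Ints[OF assms(1)] by (simp_all add: n_def)
  define d where "d = min y ((x + of_int n + 1) / 2)"
  have d: "x < d" "d \<le> y" "d < of_int n + 1"
    using n assms(3) by (auto simp: d_def min_def)
  show ?thesis
  proof (rule locally_compact_at_graph_on[where c = x and d = d and V = "{x - 1<..<d}"])
    show "continuous_on {x..d} (sine_curve A)"
      by (rule continuous_on_subset[OF continuous_on_sine_curve_unit[of n]]) (use n d in auto)
  qed (use assms d in auto)
qed

lemma continuous_on_sine_curve_left_of:
  assumes "x \<notin> of_int ` A"
  obtains n where "of_int n < x" "continuous_on {of_int n<..x} (sine_curve A)"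
proof (cases "x \<in> \<int>")
  case True
  then obtain m where m: "x = of_int m"
    by (auto elim: Ints_cases)
  then have "continuous_on {of_int (m - 1)<..x} (sine_curve A)"
    using continuous_on_sine_curve_unit_right[of "m - 1" A] assms by auto
  with m show ?thesis
    using that[of "m - 1"] by simp
next
  case False
  define m where "m = \<lfloor>x\<rfloor>"
  have m: "of_int m < x" "x < of_int m + 1"
    using of_int_floor_less_if_not_Ints[OF False] by (simp_all add: m_def)
  have "continuous_on {of_int m<..x} (sine_curve A)"
    by (rule continuous_on_subset[OF continuous_on_sine_curve_unit[of m]]) (use m in auto)
  with m show ?thesis
    using that by blast
qed

lemma locally_compact_at_graph_sine_curve_left:
  assumes "x \<notin> of_int ` A" "E \<subseteq> {..x}" "y < x" "{y..x} \<subseteq> E"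
  shows "locally_compact_at (graph_on (sine_curve A) E) (x, sine_curve A x)"
proof -
  obtain n where n: "of_int n < x" and cont: "continuous_on {of_int n<..x} (sine_curve A)"
    using continuous_on_sine_curve_left_of[OF assms(1)] .
  define d where "d = max y ((of_int n + x) / 2)"
  have d: "d < x" "y \<le> d" "of_int n < d"
    using n assms(3) by (auto simp: d_def max_def)
  show ?thesis
  proof (rule locally_compact_at_graph_on[where c = d and d = x and V = "{d<..<x + 1}"])
    show "continuous_on {d..x} (sine_curve A)"
      by (rule continuous_on_subset[OF cont]) (use d in auto)
  qed (use assms d in auto)
qed

lemma locally_compact_at_graph_sine_curve_right_iff:
  assumes "E \<subseteq> {x..}" "x < y" "{x..y} \<subseteq> E"
  shows "locally_compact_at (graph_on (sine_curve A) E) (x, sine_curve A x) \<longleftrightarrow> x \<notin> \<int>"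
  using not_locally_compact_at_graph_sine_curve_right[of x y E A]
    locally_compact_at_graph_sine_curve_right[of x E y A] assms
  by blast

lemma locally_compact_at_graph_sine_curve_left_iff:
  assumes "E \<subseteq> {..x}" "y < x" "{y..x} \<subseteq> E"
  shows "locally_compact_at (graph_on (sine_curve A) E) (x, sine_curve A x) \<longleftrightarrow> x \<notin> of_int ` A"
  using not_locally_compact_at_graph_sine_curve_left[of x A y E]
    locally_compact_at_graph_sine_curve_left[of x A E y] assms
  by blast

subsection \<open>Injective maps of the line sending intervals to intervals\<close>

lemma inj_connected_image_between:
  fixes \<phi> :: "real \<Rightarrow> real"
  assumes "inj \<phi>" and conn: "\<And>a b. connected (\<phi> ` {a..b})" and "a < b" "b < c"
  shows "\<phi> a < \<phi> b \<longleftrightarrow> \<phi> b < \<phi> c"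
proof -
  have segment: "closed_segment (\<phi> u) (\<phi> v) \<subseteq> \<phi> ` {u..v}" if "u \<le> v" for u v
  proof -
    have "convex (\<phi> ` {u..v})"
      using conn[of u v] by (simp add: connected_convex_1)
    moreover have "\<phi> u \<in> \<phi> ` {u..v}" "\<phi> v \<in> \<phi> ` {u..v}"
      using that by auto
    ultimately show ?thesis
      unfolding convex_contains_segment by blast
  qed
  have "\<phi> c \<notin> \<phi> ` {a..b}" "\<phi> a \<notin> \<phi> ` {b..c}"
    using assms(3,4) by (simp_all add: inj_image_mem_iff[OF assms(1)])
  then have "\<phi> c \<notin> closed_segment (\<phi> a) (\<phi> b)" "\<phi> a \<notin> closed_segment (\<phi> b) (\<phi> c)"
    using segment[of a b] segment[of b c] assms(3,4) by auto
  moreover have "\<phi> a \<noteq> \<phi> b" "\<phi> b \<noteq> \<phi> c"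
    using assms(3,4) by (simp_all add: inj_eq[OF assms(1)])
  ultimately show ?thesis
    by (auto simp: closed_segment_eq_real_ivl split: if_splits)
qed

lemma inj_connected_image_strict_mono:
  fixes \<phi> :: "real \<Rightarrow> real"
  assumes "inj \<phi>" and "\<And>a b. connected (\<phi> ` {a..b})"
  shows "strict_mono \<phi> \<or> strict_mono (\<lambda>x. - \<phi> x)"
proof -
  note between = inj_connected_image_between[OF assms]
  have ne: "\<phi> x \<noteq> \<phi> y" if "x \<noteq> y" for x y
    using assms(1) that by (auto dest: injD)
  have orientation: "\<phi> x < \<phi> y \<longleftrightarrow> \<phi> L < \<phi> R" if "L < x" "x < y" "y < R" for L x y R
    using between[of L x y] between[of x y R] between[of L y R] ne[of L y] ne[of y R] that
    by auto
  show ?thesis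
  proof (rule ccontr)
    assume "\<not> ?thesis"
    then obtain x y u v where "x < y" "\<not> \<phi> x < \<phi> y" "u < v" "\<not> \<phi> v < \<phi> u"
      unfolding strict_mono_def by auto
    moreover define L R where "L = min x u - 1" and "R = max y v + 1"
    ultimately have "L < x" "L < u" "y < R" "v < R"
      by auto
    with \<open>x < y\<close> \<open>u < v\<close> have "\<phi> x < \<phi> y \<longleftrightarrow> \<phi> u < \<phi> v"
      using orientation[of L x y R] orientation[of L u v R] by simp
    with \<open>\<not> \<phi> x < \<phi> y\<close> \<open>\<not> \<phi> v < \<phi> u\<close> ne[of u v] \<open>u < v\<close> show False
      by auto
  qed
qed

lemma strict_mono_Ints_succ:
  fixes \<phi> :: "real \<Rightarrow> real"
  assumes mono: "strict_mono \<phi>" and conn: "\<And>a b. connected (\<phi> ` {a..b})"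
    and Ints: "\<And>x. \<phi> x \<in> \<int> \<longleftrightarrow> x \<in> \<int>"
  shows "\<phi> (of_int n + 1) = \<phi> (of_int n) + 1"
proof -
  obtain a b :: int where ab: "\<phi> (of_int n) = of_int a" "\<phi> (of_int n + 1) = of_int b"
    using Ints[of "of_int n"] Ints[of "of_int n + 1"] by (auto elim!: Ints_cases)
  have "a < b"
    using strict_monoD[OF mono, of "of_int n" "of_int n + 1"] ab by simp
  moreover have "\<not> a + 1 < b"
  proof
    assume "a + 1 < b"
    then have "of_int (a + 1) \<in> {\<phi> (of_int n)..\<phi> (of_int n + 1)}"
      using ab by simp
    also have "\<dots> \<subseteq> \<phi> ` {of_int n..of_int n + 1}"
      by (rule connected_contains_Icc[OF conn]) auto
    finally obtain z where z: "of_int n \<le> z" "z \<le> of_int n + 1" "\<phi> z = of_int (a + 1)"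
      by auto
    then have "z \<in> \<int>"
      using Ints[of z] by simp
    moreover have "z \<noteq> of_int n" "z \<noteq> of_int n + 1"
      using z ab \<open>a + 1 < b\<close> by auto
    ultimately show False
      using z not_Ints_between[of n z] by auto
  qed
  ultimately show ?thesis
    using ab by simp
qed

lemma strict_mono_Ints_shift:
  fixes \<phi> :: "real \<Rightarrow> real"
  assumes "strict_mono \<phi>" "\<And>a b. connected (\<phi> ` {a..b})" and Ints: "\<And>x. \<phi> x \<in> \<int> \<longleftrightarrow> x \<in> \<int>"
  obtains c :: int where "\<And>n. \<phi> (of_int n) = of_int (n + c)"
proof -
  note succ = strict_mono_Ints_succ[OF assms]
  obtain c :: int where c: "\<phi> 0 = of_int c"
    using Ints[of 0] by (auto elim: Ints_cases)
  have "\<phi> (of_int n) = of_int (n + c)" for n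
  proof (induction n rule: int_induct[where k = 0])
    case base
    then show ?case
      using c by simp
  next
    case (step1 i)
    then show ?case
      using succ[of i] by simp
  next
    case (step2 i)
    then show ?case
      using succ[of "i - 1"] by simp
  qed
  then show ?thesis
    using that by blast
qed

lemma connected_superset_Ints_eq_UNIV:
  fixes S :: "real set"
  assumes "connected S" "\<int> \<subseteq> S"
  shows "S = UNIV"
proof -
  have "y \<in> S" for y
  proof -
    have "{of_int \<lfloor>y\<rfloor>..of_int (\<lfloor>y\<rfloor> + 1)} \<subseteq> S"
      using connected_contains_Icc[OF assms(1)] assms(2) by (meson Ints_of_int subsetD)
    moreover have "y \<in> {of_int \<lfloor>y\<rfloor>..of_int (\<lfloor>y\<rfloor> + 1)}"
      using floor_correct[of y] by simp
    ultimately show ?thesis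
      by blast
  qed
  then show ?thesis
    by blast
qed

subsection \<open>Embeddings between graphs\<close>

locale graph_embedding =
  fixes f g :: "real \<Rightarrow> real" and S :: "(real \<times> real) set"
    and h k :: "real \<times> real \<Rightarrow> real \<times> real"
  assumes homeo: "homeomorphism (graph_of f) S h k" and S_subset: "S \<subseteq> graph_of g"
begin

definition \<phi> :: "real \<Rightarrow> real" where
  "\<phi> x = fst (h (x, f x))"

lemma h_graph_point: "h (x, f x) = (\<phi> x, g (\<phi> x))"
proof -
  have "(x, f x) \<in> graph_of f"
    by (simp add: graph_of_def)
  then have "h (x, f x) \<in> graph_of g"
    using homeomorphism_image1[OF homeo] S_subset by blast
  then show ?thesis
    by (auto simp: graph_of_def \<phi>_def)
qed

lemma image_graph_on: "h ` graph_on f E = graph_on g (\<phi> ` E)"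
  by (simp add: graph_on_def image_image h_graph_point)

lemma inj_\<phi>: "inj \<phi>"
proof (rule injI)
  fix x y
  assume "\<phi> x = \<phi> y"
  then have "k (h (x, f x)) = k (h (y, f y))"
    by (simp add: h_graph_point)
  then show "x = y"
    by (simp add: homeomorphism_apply1[OF homeo] graph_of_def)
qed

lemma connected_image_\<phi>:
  assumes "connected (graph_on f E)"
  shows "connected (\<phi> ` E)"
proof -
  have "connected (h ` graph_on f E)"
    using homeo assms graph_on_subset_graph_of
    by (meson connected_continuous_image continuous_on_subset homeomorphism_def)
  then have "connected (fst ` graph_on g (\<phi> ` E))"
    unfolding image_graph_on by (intro connected_continuous_image continuous_on_fst continuous_on_id)
  then show ?thesis
    by simp
qed

lemma locally_compact_at_image_\<phi>_iff:
  assumes "x \<in> E"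
  shows "locally_compact_at (graph_on g (\<phi> ` E)) (\<phi> x, g (\<phi> x)) \<longleftrightarrow>
         locally_compact_at (graph_on f E) (x, f x)"
proof -
  have "homeomorphism (graph_on f E) (h ` graph_on f E) h k"
    using homeo graph_on_subset_graph_of by (rule homeomorphism_of_subsets) auto
  moreover have "(x, f x) \<in> graph_on f E"
    using assms by (simp add: graph_on_def)
  ultimately show ?thesis
    using locally_compact_at_homeomorphism_iff by (fastforce simp: image_graph_on h_graph_point)
qed

end

text \<open>Anchoring excludes both A = \<int> (needed against orientation reversal) and nonzero shifts.\<close>
definition anchored :: "int set \<Rightarrow> bool" where
  "anchored A \<longleftrightarrow> {..0} \<subseteq> A \<and> 1 \<notin> A"

lemma anchored_shift_eq_0:
  assumes "anchored A" "anchored B" and shift: "\<And>n. n \<in> A \<longleftrightarrow> n + c \<in> B"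
  shows "c = 0"
proof -
  have A: "n \<in> A \<longleftrightarrow> n \<le> 0" if "n \<le> 1" for n
    using assms(1) that by (cases "n = 1") (auto simp: anchored_def)
  have B: "n \<in> B \<longleftrightarrow> n \<le> 0" if "n \<le> 1" for n
    using assms(2) that by (cases "n = 1") (auto simp: anchored_def)
  show "c = 0"
  proof (cases "0 < c")
    case True
    then show ?thesis
      using shift[of "1 - c"] A[of "1 - c"] B[of 1] by simp
  next
    case False
    then show ?thesis
      using shift[of 1] A[of 1] B[of "1 + c"] by simp
  qed
qed

locale sine_curve_embedding = graph_embedding "sine_curve A" "sine_curve B" S h k
  for A B :: "int set" and S h k
begin

lemma connected_image_\<phi>_Icc: "connected (\<phi> ` {a..b})"
  by (rule connected_image_\<phi>) (rule connected_graph_on_sine_curve)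

lemma Icc_subset_image_\<phi>:
  assumes "a \<le> b"
  shows "{\<phi> a..\<phi> b} \<subseteq> \<phi> ` {a..b}" "{\<phi> b..\<phi> a} \<subseteq> \<phi> ` {a..b}"
  using connected_contains_Icc[OF connected_image_\<phi>_Icc] assms by auto

lemma locally_compact_at_atLeast_iff:
  "locally_compact_at (graph_on (sine_curve A) {x..}) (x, sine_curve A x) \<longleftrightarrow> x \<notin> \<int>"
  by (rule locally_compact_at_graph_sine_curve_right_iff[of _ _ "x + 1"]) auto

lemma locally_compact_at_atMost_iff:
  "locally_compact_at (graph_on (sine_curve A) {..x}) (x, sine_curve A x) \<longleftrightarrow> x \<notin> of_int ` A"
  by (rule locally_compact_at_graph_sine_curve_left_iff[of _ _ "x - 1"]) auto

text \<open>An orientation-reversing \<phi> exchanges right and left half-lines, so it matches the integers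
  with B and A with the integers; hence A would contain every integer.\<close>
lemma Ints_in_A_if_decreasing:
  fixes x :: real
  assumes "strict_mono (\<lambda>x. - \<phi> x)" "x \<in> \<int>"
  shows "x \<in> of_int ` A"
proof -
  have dec: "\<phi> v < \<phi> u" if "u < v" for u v
    using strict_monoD[OF assms(1) that] by simp
  have dec_le: "\<phi> v \<le> \<phi> u" if "u \<le> v" for u v
    using dec[of u v] that by (cases "u = v") auto
  have "locally_compact_at (graph_on (sine_curve B) (\<phi> ` {x..})) (\<phi> x, sine_curve B (\<phi> x))
        \<longleftrightarrow> \<phi> x \<notin> of_int ` B"
  proof (rule locally_compact_at_graph_sine_curve_left_iff)
    show "\<phi> ` {x..} \<subseteq> {..\<phi> x}"
      using dec_le by auto
    show "\<phi> (x + 1) < \<phi> x"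
      by (rule dec) simp
    show "{\<phi> (x + 1)..\<phi> x} \<subseteq> \<phi> ` {x..}"
      using Icc_subset_image_\<phi>(2)[of x "x + 1"] by auto
  qed
  then have "\<phi> x \<in> of_int ` B"
    using locally_compact_at_image_\<phi>_iff[of x "{x..}"] locally_compact_at_atLeast_iff[of x] assms(2)
    by simp
  then have "\<phi> x \<in> \<int>"
    by auto
  have "locally_compact_at (graph_on (sine_curve B) (\<phi> ` {..x})) (\<phi> x, sine_curve B (\<phi> x))
        \<longleftrightarrow> \<phi> x \<notin> \<int>"
  proof (rule locally_compact_at_graph_sine_curve_right_iff)
    show "\<phi> ` {..x} \<subseteq> {\<phi> x..}"
      using dec_le by auto
    show "\<phi> x < \<phi> (x - 1)"
      by (rule dec) simp
    show "{\<phi> x..\<phi> (x - 1)} \<subseteq> \<phi> ` {..x}"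
      using Icc_subset_image_\<phi>(2)[of "x - 1" x] by auto
  qed
  then show ?thesis
    using locally_compact_at_image_\<phi>_iff[of x "{..x}"] locally_compact_at_atMost_iff[of x]
      \<open>\<phi> x \<in> \<int>\<close>
    by simp
qed

lemma Ints_iff_if_increasing:
  assumes "strict_mono \<phi>"
  shows "\<phi> x \<in> \<int> \<longleftrightarrow> x \<in> \<int>"
proof -
  have "locally_compact_at (graph_on (sine_curve B) (\<phi> ` {x..})) (\<phi> x, sine_curve B (\<phi> x))
        \<longleftrightarrow> \<phi> x \<notin> \<int>"
  proof (rule locally_compact_at_graph_sine_curve_right_iff)
    show "\<phi> ` {x..} \<subseteq> {\<phi> x..}"
      using strict_mono_less_eq[OF assms] by auto
    show "\<phi> x < \<phi> (x + 1)"
      by (rule strict_monoD[OF assms]) simp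
    show "{\<phi> x..\<phi> (x + 1)} \<subseteq> \<phi> ` {x..}"
      using Icc_subset_image_\<phi>(1)[of x "x + 1"] by auto
  qed
  then show ?thesis
    using locally_compact_at_image_\<phi>_iff[of x "{x..}"] locally_compact_at_atLeast_iff[of x] by simp
qed

lemma A_iff_if_increasing:
  assumes "strict_mono \<phi>"
  shows "\<phi> x \<in> of_int ` B \<longleftrightarrow> x \<in> of_int ` A"
proof -
  have "locally_compact_at (graph_on (sine_curve B) (\<phi> ` {..x})) (\<phi> x, sine_curve B (\<phi> x))
        \<longleftrightarrow> \<phi> x \<notin> of_int ` B"
  proof (rule locally_compact_at_graph_sine_curve_left_iff)
    show "\<phi> ` {..x} \<subseteq> {..\<phi> x}"
      using strict_mono_less_eq[OF assms] by auto
    show "\<phi> (x - 1) < \<phi> x"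
      by (rule strict_monoD[OF assms]) simp
    show "{\<phi> (x - 1)..\<phi> x} \<subseteq> \<phi> ` {..x}"
      using Icc_subset_image_\<phi>(1)[of "x - 1" x] by auto
  qed
  then show ?thesis
    using locally_compact_at_image_\<phi>_iff[of x "{..x}"] locally_compact_at_atMost_iff[of x] by simp
qed

lemma rigid_if_anchored:
  assumes "anchored A" "anchored B"
  shows "A = B \<and> S = graph_of (sine_curve B)"
proof -
  have "\<not> strict_mono (\<lambda>x. - \<phi> x)"
    using Ints_in_A_if_decreasing[of 1] assms(1) by (auto simp: anchored_def)
  then have mono: "strict_mono \<phi>"
    using inj_connected_image_strict_mono[OF inj_\<phi> connected_image_\<phi>_Icc] by blast
  obtain c :: int where c: "\<And>n. \<phi> (of_int n) = of_int (n + c)"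
    using strict_mono_Ints_shift[OF mono connected_image_\<phi>_Icc Ints_iff_if_increasing[OF mono]]
    by blast
  have shift: "n \<in> A \<longleftrightarrow> n + c \<in> B" for n
    using A_iff_if_increasing[OF mono, of "of_int n"] c[of n]
    by (simp add: image_iff del: of_int_add)
  then have "c = 0"
    by (rule anchored_shift_eq_0[OF assms])
  with shift have "A = B"
    by auto
  have "range \<phi> = UNIV"
  proof (rule connected_superset_Ints_eq_UNIV)
    show "connected (range \<phi>)"
      by (rule connected_image_\<phi>)
        (simp add: connected_graph_of_sine_curve flip: graph_of_eq_graph_on)
    show "\<int> \<subseteq> range \<phi>"
      using c \<open>c = 0\<close> by (auto elim!: Ints_cases intro: range_eqI[of _ _ "of_int _"])
  qed
  then have "S = graph_of (sine_curve B)"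
    using homeo image_graph_on[of UNIV] by (simp add: homeomorphism_def graph_of_eq_graph_on)
  with \<open>A = B\<close> show ?thesis
    by blast
qed

end

lemma graph_sine_curve_embedding_rigid:
  assumes "anchored A" "anchored B"
    and "S \<subseteq> graph_of (sine_curve B)" "graph_of (sine_curve A) homeomorphic S"
  shows "A = B \<and> S = graph_of (sine_curve B)"
proof -
  obtain h k where "homeomorphism (graph_of (sine_curve A)) S h k"
    using assms(4) unfolding homeomorphic_def by blast
  then interpret sine_curve_embedding A B S h k
    using assms(3) by unfold_locales
  show ?thesis
    using rigid_if_anchored[OF assms(1,2)] .
qed

lemma sine_curve_anchored_eqD:
  assumes "anchored A" "anchored B" "sine_curve A = sine_curve B"
  shows "A = B"
proof -
  have "graph_of (sine_curve A) homeomorphic graph_of (sine_curve B)"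
    unfolding assms(3) by (rule homeomorphic_refl)
  then show ?thesis
    using graph_sine_curve_embedding_rigid[OF assms(1,2) order_refl] by blast
qed

subsection \<open>Continuum many anchored sets\<close>

text \<open>Codes the Dedekind cut of t, through an enumeration of the rationals, into the integers \<ge> 2.\<close>
definition rat_cut_set :: "real \<Rightarrow> int set" where
  "rat_cut_set t = {..0} \<union> {int k + 2 | k. from_nat_into \<rat> k < t}"

lemma anchored_rat_cut_set: "anchored (rat_cut_set t)"
  by (auto simp: anchored_def rat_cut_set_def)

lemma inj_rat_cut_set: "inj rat_cut_set"
proof (rule linorder_injI)
  fix s t :: real
  assume "s < t"
  then obtain r where "r \<in> \<rat>" "s < r" "r < t"
    using Rats_dense_in_real by blast
  moreover have "range (from_nat_into \<rat>) = \<rat>"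
    using Rats_0 countable_rat by (metis empty_iff range_from_nat_into)
  ultimately obtain k where k: "from_nat_into \<rat> k = r"
    by (metis rangeE)
  have "int k + 2 \<in> rat_cut_set t"
    using k \<open>r < t\<close> unfolding rat_cut_set_def by blast
  moreover have "int k + 2 \<notin> rat_cut_set s"
    using k \<open>s < r\<close> unfolding rat_cut_set_def by auto
  ultimately show "rat_cut_set s \<noteq> rat_cut_set t"
    by blast
qed

lemma inj_sine_curve_rat_cut_set: "inj (\<lambda>t. sine_curve (rat_cut_set t))"
proof (rule injI)
  fix s t
  assume "sine_curve (rat_cut_set s) = sine_curve (rat_cut_set t)"
  then have "rat_cut_set s = rat_cut_set t"
    by (rule sine_curve_anchored_eqD[OF anchored_rat_cut_set anchored_rat_cut_set])
  then show "s = t"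
    by (rule injD[OF inj_rat_cut_set])
qed

theorem theorem3:
  shows "\<exists>\<F> :: (real \<Rightarrow> real) set.
           \<F> \<approx> (UNIV :: real set) \<and>
           (\<forall>f\<in>\<F>. connected (graph_of f) \<and>
                  completely_metrizable_space (subtopology euclidean (graph_of f))) \<and>
           (\<forall>f\<in>\<F>. \<forall>g\<in>\<F>. \<forall>S. S \<subseteq> graph_of g \<and> graph_of f homeomorphic S
                  \<longrightarrow> f = g \<and> S = graph_of g)"
proof -
  let ?F = "range (\<lambda>t. sine_curve (rat_cut_set t))"
  have "?F \<approx> (UNIV :: real set)"
    by (rule inj_on_image_eqpoll_self[OF inj_sine_curve_rat_cut_set])
  moreover have "f = g \<and> S = graph_of g"
    if "f \<in> ?F" "g \<in> ?F" "S \<subseteq> graph_of g" "graph_of f homeomorphic S" for f g S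
  proof -
    obtain s t where fg: "f = sine_curve (rat_cut_set s)" "g = sine_curve (rat_cut_set t)"
      using \<open>f \<in> ?F\<close> \<open>g \<in> ?F\<close> by blast
    with that(3,4) have "rat_cut_set s = rat_cut_set t \<and> S = graph_of g"
      using graph_sine_curve_embedding_rigid[OF anchored_rat_cut_set anchored_rat_cut_set]
      by simp
    with fg show ?thesis
      by simp
  qed
  ultimately show ?thesis
    using connected_graph_of_sine_curve completely_metrizable_graph_of_sine_curve by blast
qed

end
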